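(* For any $\sigma\in\mathcal K$ and $\beta\in\mathcal{KL}$ there exist $\hat\rho\in\mathcal K$ and $\hat\beta\in\mathcal{KL}$ such that $\min\{\sigma(s),\beta(r,t)\}\le\hat\beta\big(s,\ \tfrac{t}{1+\hat\rho(r)}\big)$ for all $t,r,s\ge0$.
   Context: Class $\mathcal K$: continuous strictly increasing $\sigma:\mathbb R_{\ge0}\to\mathbb R_{\ge0}$ with $\sigma(0)=0$. Class $\mathcal{KL}$: continuous $\beta:\mathbb R_{\ge0}\times\mathbb R_{\ge0}\to\mathbb R_{\ge0}$ such that $\beta(\cdot,t)\in\mathcal K$ for each $t\ge0$ and, for each $s\ge0$, $\beta(s,t)$ decreases to $0$ as $t\to\infty$. *)

theory Defs
  imports "HOL-Analysis.Analysis"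
begin

text \<open>Class K: continuous, strictly increasing on [0,inf), zero at zero, nonnegative values.
  Functions are total on real; only their behaviour on the nonnegative reals matters.\<close>
definition class_K :: "(real \<Rightarrow> real) \<Rightarrow> bool" where
  "class_K \<sigma> \<longleftrightarrow> continuous_on {0..} \<sigma> \<and> strict_mono_on {0..} \<sigma> \<and> \<sigma> 0 = 0
     \<and> (\<forall>s\<ge>0. \<sigma> s \<ge> 0)"

definition class_KL :: "(real \<Rightarrow> real \<Rightarrow> real) \<Rightarrow> bool" where
  "class_KL \<beta> \<longleftrightarrow> continuous_on ({0..} \<times> {0..}) (\<lambda>(s,t). \<beta> s t)
     \<and> (\<forall>t\<ge>0. class_K (\<lambda>s. \<beta> s t))
     \<and> (\<forall>s\<ge>0. antimono_on {0..} (\<beta> s) \<and> ((\<beta> s) \<longlongrightarrow> 0) at_top)"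

end

(* Choose times T n >= 1 with beta (n, T n) <= 2^-n and a class-K function rho with
   T (ceiling r) <= rho r for r > 1.  For tau = t / (1 + rho r) > 1 this gives
   tau * T (ceiling r) <= t, so beta (r, t) <= beta (ceiling r, tau * T (ceiling r)) is bounded by
   the envelope g tau = beta (1, max 1 tau) + (SUM n. beta (n, max 1 tau * T n)).  Domination by
   2^-n makes g continuous, nonincreasing and convergent to 0, hence
   sigma s / max 1 tau + min (sigma s) (g tau) is of class KL; for tau <= 1 its first summand
   alone is sigma s. *)

theory Submission
  imports Defs
begin

lemma class_K_nonneg:
  assumes "class_K \<sigma>" "0 \<le> s"
  shows "0 \<le> \<sigma> s"
  using assms unfolding class_K_def by blast

lemma class_KL_nonneg:
  assumes "class_KL \<beta>" "0 \<le> s" "0 \<le> t"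
  shows "0 \<le> \<beta> s t"
  using assms unfolding class_KL_def class_K_def by blast

lemma class_KL_mono:
  assumes "class_KL \<beta>" "0 \<le> r" "r \<le> r'" "0 \<le> t"
  shows "\<beta> r t \<le> \<beta> r' t"
proof -
  have "strict_mono_on {0..} (\<lambda>s. \<beta> s t)"
    using assms(1,4) unfolding class_KL_def class_K_def by blast
  then show ?thesis
    using assms(2,3) strict_mono_onD[of "{0..}" "\<lambda>s. \<beta> s t" r r']
    by (cases "r = r'") auto
qed

lemma class_KL_antimono:
  assumes "class_KL \<beta>" "0 \<le> s" "0 \<le> t" "t \<le> t'"
  shows "\<beta> s t' \<le> \<beta> s t"
  using assms monotone_onD[of "{0..}" "(\<le>)" "(\<ge>)" "\<beta> s" t t'] unfolding class_KL_def by auto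

lemma class_KL_tendsto:
  assumes "class_KL \<beta>" "0 \<le> s"
  shows "(\<beta> s \<longlongrightarrow> 0) at_top"
  using assms unfolding class_KL_def by blast

lemma class_KL_continuous_on:
  assumes "class_KL \<beta>" "0 \<le> s"
  shows "continuous_on {0..} (\<beta> s)"
proof -
  have "continuous_on ({0..} \<times> {0..}) (\<lambda>(s, t). \<beta> s t)"
    using assms(1) unfolding class_KL_def by blast
  then have "continuous_on {0..} (\<lambda>t. (\<lambda>(s, t). \<beta> s t) (s, t))"
    by (rule continuous_on_compose2) (use assms(2) in \<open>auto intro!: continuous_intros\<close>)
  then show ?thesis by simp
qed

lemma tendsto_0_at_top_below:
  fixes f :: "real \<Rightarrow> real"
  assumes "(f \<longlongrightarrow> 0) at_top" "0 < e"
  shows "\<exists>t\<ge>c. f t \<le> e"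
proof -
  obtain t0 where "\<And>t. t \<ge> t0 \<Longrightarrow> f t < e"
    using order_tendstoD(2)[OF assms] unfolding eventually_at_top_linorder by blast
  then show ?thesis by (intro exI[of _ "max c t0"]) (auto intro: less_imp_le)
qed

lemma class_KL_geometric_times:
  assumes "class_KL \<beta>"
  shows "\<exists>T. \<forall>n. 1 \<le> T n \<and> \<beta> (real n) (T n) \<le> (1/2)^n"
  using tendsto_0_at_top_below[OF class_KL_tendsto[OF assms]] by (intro choice) simp

lemma continuous_on_suminf_dominated:
  fixes f :: "nat \<Rightarrow> 'a::topological_space \<Rightarrow> 'b::banach"
  assumes "\<And>n. continuous_on A (f n)" "\<And>n x. x \<in> A \<Longrightarrow> norm (f n x) \<le> M n" "summable M"
  shows "continuous_on A (\<lambda>x. \<Sum>n. f n x)"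
proof (rule uniform_limit_theorem)
  show "uniform_limit A (\<lambda>N x. \<Sum>n<N. f n x) (\<lambda>x. \<Sum>n. f n x) sequentially"
    using assms(2,3) by (rule Weierstrass_m_test)
qed (use assms(1) in \<open>auto intro!: always_eventually continuous_on_sum\<close>)

lemma tendsto_suminf_dominated:
  fixes f :: "nat \<Rightarrow> 'a \<Rightarrow> 'b::{real_normed_algebra, banach}"
  assumes "\<And>n. ((\<lambda>x. f n x) \<longlongrightarrow> 0) F" "\<And>n x. norm (f n x) \<le> M n" "summable M" "F \<noteq> bot"
  shows "((\<lambda>x. \<Sum>n. f n x) \<longlongrightarrow> 0) F"
proof -
  have "((\<lambda>x. \<Sum>n. f n x) \<longlongrightarrow> (\<Sum>n. 0)) F"
    by (rule tannerys_theorem[THEN conjunct2, THEN conjunct2])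
       (use assms in \<open>auto intro: always_eventually\<close>)
  then show ?thesis by simp
qed

definition hinge_sum :: "(nat \<Rightarrow> real) \<Rightarrow> nat \<Rightarrow> real \<Rightarrow> real" where
  "hinge_sum a N r = r + (\<Sum>k<N. a k * max 0 (r - real k))"

(* The locally finite sum r + (SUM k. a k * max 0 (r - k)): terms with k >= r vanish. *)
definition hinge_function :: "(nat \<Rightarrow> real) \<Rightarrow> real \<Rightarrow> real" where
  "hinge_function a r = hinge_sum a (nat \<lceil>r\<rceil> + 1) r"

lemma hinge_sum_eq:
  assumes "r \<le> real N" "N \<le> M"
  shows "hinge_sum a M r = hinge_sum a N r"
proof -
  have "(\<Sum>k<M. a k * max 0 (r - real k)) = (\<Sum>k<N. a k * max 0 (r - real k))"
    by (rule sum.mono_neutral_right) (use assms in auto)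
  then show ?thesis by (simp add: hinge_sum_def)
qed

lemma hinge_function_eq_hinge_sum:
  assumes "nat \<lceil>r\<rceil> + 1 \<le> N"
  shows "hinge_function a r = hinge_sum a N r"
  unfolding hinge_function_def by (rule hinge_sum_eq[symmetric]) (use assms in linarith)+

lemma hinge_sum_strict_mono:
  assumes "\<And>k. 0 \<le> a k" "x < y"
  shows "hinge_sum a N x < hinge_sum a N y"
proof -
  have "(\<Sum>k<N. a k * max 0 (x - real k)) \<le> (\<Sum>k<N. a k * max 0 (y - real k))"
    by (intro sum_mono mult_left_mono) (use assms in auto)
  then show ?thesis using assms(2) by (simp add: hinge_sum_def)
qed

lemma isCont_hinge_function: "isCont (hinge_function a) x"
proof -
  have "\<forall>\<^sub>F y in nhds x. y < x + 1"
    using eventually_nhds_in_open[of "{..<x + 1}" x] by simp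
  then have "\<forall>\<^sub>F y in nhds x. hinge_function a y = hinge_sum a (nat \<lceil>x\<rceil> + 2) y"
    by eventually_elim (rule hinge_function_eq_hinge_sum, linarith)
  moreover have "isCont (hinge_sum a (nat \<lceil>x\<rceil> + 2)) x"
    unfolding hinge_sum_def by (intro continuous_intros)
  ultimately show ?thesis
    using isCont_cong by blast
qed

lemma strict_mono_hinge_function:
  assumes "\<And>k. 0 \<le> a k"
  shows "strict_mono (hinge_function a)"
proof (rule strict_monoI)
  fix x y :: real assume "x < y"
  then have "hinge_function a x = hinge_sum a (nat \<lceil>y\<rceil> + 1) x"
    by (intro hinge_function_eq_hinge_sum) linarith
  then show "hinge_function a x < hinge_function a y"
    using hinge_sum_strict_mono[OF assms \<open>x < y\<close>] by (simp add: hinge_function_def)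
qed

lemma class_K_hinge_function:
  assumes "\<And>k. 0 \<le> a k"
  shows "class_K (hinge_function a)"
proof -
  have zero: "hinge_function a 0 = 0"
    by (simp add: hinge_function_def hinge_sum_def)
  have mono: "strict_mono (hinge_function a)"
    using assms by (rule strict_mono_hinge_function)
  then have "strict_mono_on {0..} (hinge_function a)" and "\<forall>s\<ge>0. 0 \<le> hinge_function a s"
    using strict_mono_less_eq[OF mono, of 0] zero by (auto simp: strict_mono_def strict_mono_on_def)
  moreover have "continuous_on {0..} (hinge_function a)"
    by (intro continuous_at_imp_continuous_on ballI isCont_hinge_function)
  ultimately show ?thesis
    unfolding class_K_def using zero by blast
qed

lemma hinge_function_ge:
  assumes "\<And>k. 0 \<le> a k" "real k + 1 \<le> r"
  shows "a k \<le> hinge_function a r"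
proof -
  have "a k * 1 \<le> a k * max 0 (r - real k)"
    using assms by (intro mult_left_mono) auto
  also have "\<dots> \<le> (\<Sum>j<nat \<lceil>r\<rceil> + 1. a j * max 0 (r - real j))"
    by (rule member_le_sum) (use assms in \<open>auto intro!: mult_nonneg_nonneg, linarith\<close>)
  finally show ?thesis
    using assms(2) by (simp add: hinge_function_def hinge_sum_def)
qed

lemma exists_class_K_ge_ceiling:
  fixes T :: "nat \<Rightarrow> real"
  assumes "\<And>n. 0 \<le> T n"
  shows "\<exists>\<rho>. class_K \<rho> \<and> (\<forall>r>1. T (nat \<lceil>r\<rceil>) \<le> \<rho> r)"
proof (intro exI conjI allI impI)
  let ?a = "\<lambda>k. T (k + 2)"
  show "class_K (hinge_function ?a)"
    using assms by (intro class_K_hinge_function)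
  fix r :: real assume "1 < r"
  then have "nat \<lceil>r\<rceil> - 2 + 2 = nat \<lceil>r\<rceil>" and "real (nat \<lceil>r\<rceil> - 2) + 1 \<le> r"
    by linarith+
  then show "T (nat \<lceil>r\<rceil>) \<le> hinge_function ?a r"
    using hinge_function_ge[of ?a "nat \<lceil>r\<rceil> - 2" r] assms by simp
qed

lemma filterlim_max_1_at_top: "filterlim (\<lambda>\<tau>::real. max 1 \<tau>) at_top at_top"
  by (rule filterlim_at_top_mono[OF filterlim_ident]) auto

lemma class_KL_div_max_plus_min:
  assumes \<sigma>: "class_K \<sigma>"
    and g_cont: "continuous_on {0..} g" and g_nonneg: "\<And>\<tau>. 0 \<le> \<tau> \<Longrightarrow> 0 \<le> g \<tau>"
    and g_antimono: "antimono_on {0..} g" and g_tendsto: "(g \<longlongrightarrow> 0) at_top"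
  shows "class_KL (\<lambda>s \<tau>. \<sigma> s / max 1 \<tau> + min (\<sigma> s) (g \<tau>))"
  unfolding class_KL_def
proof (intro conjI allI impI)
  have \<sigma>_facts: "continuous_on {0..} \<sigma>" "strict_mono_on {0..} \<sigma>" "\<sigma> 0 = 0"
    using \<sigma> unfolding class_K_def by auto
  show "continuous_on ({0..} \<times> {0..}) (\<lambda>(s, \<tau>). \<sigma> s / max 1 \<tau> + min (\<sigma> s) (g \<tau>))"
    unfolding case_prod_beta
    by (intro continuous_intros continuous_on_compose2[OF \<sigma>_facts(1)] continuous_on_compose2[OF g_cont]) auto
  fix t :: real assume "0 \<le> t"
  have "strict_mono_on {0..} (\<lambda>s. \<sigma> s / max 1 t + min (\<sigma> s) (g t))"
  proof (rule strict_mono_onI)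
    fix a b :: real assume "a \<in> {0..}" "b \<in> {0..}" "a < b"
    then have "\<sigma> a < \<sigma> b"
      by (rule strict_mono_onD[OF \<sigma>_facts(2)])
    then show "\<sigma> a / max 1 t + min (\<sigma> a) (g t) < \<sigma> b / max 1 t + min (\<sigma> b) (g t)"
      by (intro add_less_le_mono divide_strict_right_mono) auto
  qed
  moreover have "continuous_on {0..} (\<lambda>s. \<sigma> s / max 1 t + min (\<sigma> s) (g t))"
    by (intro continuous_intros \<sigma>_facts(1)) auto
  ultimately show "class_K (\<lambda>s. \<sigma> s / max 1 t + min (\<sigma> s) (g t))"
    unfolding class_K_def using \<sigma>_facts(3) class_K_nonneg[OF \<sigma>] g_nonneg[OF \<open>0 \<le> t\<close>] by simp
next
  fix s :: real assume "0 \<le> s"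
  show "antimono_on {0..} (\<lambda>\<tau>. \<sigma> s / max 1 \<tau> + min (\<sigma> s) (g \<tau>))"
  proof (rule monotone_onI)
    fix a b :: real assume "a \<in> {0..}" "b \<in> {0..}" "a \<le> b"
    then have "\<sigma> s / max 1 b \<le> \<sigma> s / max 1 a" and "g b \<le> g a"
      using class_K_nonneg[OF \<sigma> \<open>0 \<le> s\<close>] monotone_onD[OF g_antimono] by (auto intro: divide_left_mono)
    then show "\<sigma> s / max 1 b + min (\<sigma> s) (g b) \<le> \<sigma> s / max 1 a + min (\<sigma> s) (g a)"
      by linarith
  qed
  have "((\<lambda>\<tau>. \<sigma> s / max 1 \<tau> + min (\<sigma> s) (g \<tau>)) \<longlongrightarrow> 0 + min (\<sigma> s) 0) at_top"
    by (intro tendsto_add tendsto_min tendsto_const g_tendsto tendsto_divide_0[OF tendsto_const]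
        filterlim_at_top_imp_at_infinity filterlim_max_1_at_top)
  then show "((\<lambda>\<tau>. \<sigma> s / max 1 \<tau> + min (\<sigma> s) (g \<tau>)) \<longlongrightarrow> 0) at_top"
    using class_K_nonneg[OF \<sigma> \<open>0 \<le> s\<close>] by simp
qed

lemma min_le_div_max_plus_min:
  fixes a b c \<tau> :: real
  assumes "0 \<le> a" "0 \<le> c" "1 < \<tau> \<Longrightarrow> b \<le> c"
  shows "min a b \<le> a / max 1 \<tau> + min a c"
proof (cases "\<tau> \<le> 1")
  case True
  then show ?thesis
    using assms(1,2) by (simp add: min_le_iff_disj)
next
  case False
  then have "min a b \<le> min a c"
    using assms(3) by (simp add: min.coboundedI2)
  moreover have "0 \<le> a / max 1 \<tau>"
    using assms(1) by simp
  ultimately show ?thesis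
    by linarith
qed

locale KL_envelope =
  fixes \<beta> :: "real \<Rightarrow> real \<Rightarrow> real" and T :: "nat \<Rightarrow> real"
  assumes KL: "class_KL \<beta>"
    and T_ge_1: "\<And>n. 1 \<le> T n"
    and T_small: "\<And>n. \<beta> (real n) (T n) \<le> (1/2)^n"
begin

definition envelope_term :: "nat \<Rightarrow> real \<Rightarrow> real" where
  "envelope_term n \<tau> = \<beta> (real n) (max 1 \<tau> * T n)"

(* The first summand handles r <= 1, where T (ceiling r) is not controlled. *)
definition envelope :: "real \<Rightarrow> real" where
  "envelope \<tau> = \<beta> 1 (max 1 \<tau>) + (\<Sum>n. envelope_term n \<tau>)"

lemma envelope_term_nonneg: "0 \<le> envelope_term n \<tau>"
  unfolding envelope_term_def using T_ge_1[of n] by (intro class_KL_nonneg[OF KL]) auto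

lemma envelope_term_antimono:
  assumes "\<tau> \<le> \<tau>'"
  shows "envelope_term n \<tau>' \<le> envelope_term n \<tau>"
  unfolding envelope_term_def using assms T_ge_1[of n]
  by (intro class_KL_antimono[OF KL] mult_right_mono) auto

lemma envelope_term_le: "envelope_term n \<tau> \<le> (1/2)^n"
proof -
  have "envelope_term n \<tau> \<le> \<beta> (real n) (T n)"
    unfolding envelope_term_def using T_ge_1[of n] by (intro class_KL_antimono[OF KL]) auto
  then show ?thesis
    using T_small[of n] by linarith
qed

lemma summable_envelope_term: "summable (\<lambda>n. envelope_term n \<tau>)"
  by (rule summable_comparison_test[OF _ summable_geometric[of "1/2"]])
     (use envelope_term_nonneg envelope_term_le in auto)

lemma continuous_on_envelope_term: "continuous_on UNIV (envelope_term n)"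
proof -
  have "continuous_on UNIV (\<lambda>\<tau>::real. max 1 \<tau> * T n)"
    by (intro continuous_intros)
  moreover have "(\<lambda>\<tau>. max 1 \<tau> * T n) ` UNIV \<subseteq> {0..}"
    using T_ge_1[of n] by auto
  ultimately show ?thesis
    unfolding envelope_term_def
    by (rule continuous_on_compose2[OF class_KL_continuous_on[OF KL of_nat_0_le_iff]])
qed

lemma envelope_term_tendsto: "(envelope_term n \<longlongrightarrow> 0) at_top"
proof -
  have "filterlim (\<lambda>\<tau>. max 1 \<tau> * T n) at_top at_top"
    using T_ge_1[of n] by (intro filterlim_at_top_mult_tendsto_pos[OF tendsto_const _ filterlim_max_1_at_top]) auto
  then show ?thesis
    unfolding envelope_term_def by (rule filterlim_compose[OF class_KL_tendsto[OF KL of_nat_0_le_iff]])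
qed

lemma envelope_nonneg: "0 \<le> envelope \<tau>"
  unfolding envelope_def
  using suminf_nonneg[OF summable_envelope_term envelope_term_nonneg] class_KL_nonneg[OF KL, of 1 "max 1 \<tau>"]
  by simp

lemma envelope_antimono: "antimono envelope"
proof (rule antimonoI)
  fix \<tau> \<tau>' :: real assume "\<tau> \<le> \<tau>'"
  then have "(\<Sum>n. envelope_term n \<tau>') \<le> (\<Sum>n. envelope_term n \<tau>)"
    by (intro suminf_le summable_envelope_term envelope_term_antimono)
  moreover have "\<beta> 1 (max 1 \<tau>') \<le> \<beta> 1 (max 1 \<tau>)"
    using \<open>\<tau> \<le> \<tau>'\<close> by (intro class_KL_antimono[OF KL]) auto
  ultimately show "envelope \<tau>' \<le> envelope \<tau>"
    unfolding envelope_def by linarith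
qed

lemma continuous_on_envelope: "continuous_on UNIV envelope"
proof -
  have "continuous_on UNIV (\<lambda>\<tau>. \<Sum>n. envelope_term n \<tau>)"
    by (rule continuous_on_suminf_dominated[OF continuous_on_envelope_term _ summable_geometric[of "1/2"]])
       (use envelope_term_nonneg envelope_term_le in auto)
  moreover have "continuous_on UNIV (\<lambda>\<tau>::real. \<beta> 1 (max 1 \<tau>))"
    by (rule continuous_on_compose2[OF class_KL_continuous_on[OF KL]]) (auto intro: continuous_intros)
  ultimately show ?thesis
    unfolding envelope_def by (intro continuous_intros)
qed

lemma envelope_tendsto: "(envelope \<longlongrightarrow> 0) at_top"
proof -
  have "((\<lambda>\<tau>. \<Sum>n. envelope_term n \<tau>) \<longlongrightarrow> 0) at_top"
    by (rule tendsto_suminf_dominated[OF envelope_term_tendsto _ summable_geometric[of "1/2"]])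
       (use envelope_term_nonneg envelope_term_le in auto)
  moreover have "((\<lambda>\<tau>. \<beta> 1 (max 1 \<tau>)) \<longlongrightarrow> 0) at_top"
    by (rule filterlim_compose[OF class_KL_tendsto[OF KL] filterlim_max_1_at_top]) simp
  ultimately show ?thesis
    unfolding envelope_def using tendsto_add by fastforce
qed

lemma le_envelope:
  assumes "0 \<le> r" "1 < \<tau>" "\<tau> \<le> t" "1 < r \<Longrightarrow> \<tau> * T (nat \<lceil>r\<rceil>) \<le> t"
  shows "\<beta> r t \<le> envelope \<tau>"
proof (cases "r \<le> 1")
  case True
  have "\<beta> r t \<le> \<beta> 1 t"
    using assms True by (intro class_KL_mono[OF KL]) auto
  also have "\<dots> \<le> \<beta> 1 (max 1 \<tau>)"
    using assms by (intro class_KL_antimono[OF KL]) auto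
  also have "\<dots> \<le> envelope \<tau>"
    unfolding envelope_def using suminf_nonneg[OF summable_envelope_term envelope_term_nonneg] by simp
  finally show ?thesis .
next
  case False
  define n where "n = nat \<lceil>r\<rceil>"
  have "0 \<le> \<tau> * T n"
    using assms(2) T_ge_1[of n] by simp
  have "\<beta> r t \<le> \<beta> (real n) t"
    using assms unfolding n_def by (intro class_KL_mono[OF KL]) auto
  also have "\<dots> \<le> envelope_term n \<tau>"
    unfolding envelope_term_def using assms False \<open>0 \<le> \<tau> * T n\<close>
    by (intro class_KL_antimono[OF KL]) (auto simp: n_def)
  also have "\<dots> \<le> (\<Sum>n. envelope_term n \<tau>)"
    using sum_le_suminf[OF summable_envelope_term, of "{n}"] envelope_term_nonneg by simp
  also have "\<dots> \<le> envelope \<tau>"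
    unfolding envelope_def using class_KL_nonneg[OF KL, of 1 "max 1 \<tau>"] by simp
  finally show ?thesis .
qed

lemma le_envelope_div:
  assumes "0 \<le> r" "0 \<le> t" "0 \<le> p" "1 < r \<Longrightarrow> T (nat \<lceil>r\<rceil>) \<le> p" "1 < t / (1 + p)"
  shows "\<beta> r t \<le> envelope (t / (1 + p))"
proof (rule le_envelope)
  show "t / (1 + p) \<le> t"
    using assms(2,3) by (simp add: divide_le_eq mult_le_cancel_left1)
  assume "1 < r"
  then have "t / (1 + p) * T (nat \<lceil>r\<rceil>) \<le> t / (1 + p) * (1 + p)"
    using assms(4,5) by (intro mult_left_mono) auto
  also have "\<dots> = t"
    using assms(3) by simp
  finally show "t / (1 + p) * T (nat \<lceil>r\<rceil>) \<le> t" .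
qed (use assms in auto)

end

theorem lemmaA1:
  fixes \<sigma> :: "real \<Rightarrow> real" and \<beta> :: "real \<Rightarrow> real \<Rightarrow> real"
  assumes "class_K \<sigma>" and "class_KL \<beta>"
  shows "\<exists>\<rho>h \<beta>h. class_K \<rho>h \<and> class_KL \<beta>h \<and>
           (\<forall>t\<ge>0. \<forall>r\<ge>0. \<forall>s\<ge>0. min (\<sigma> s) (\<beta> r t) \<le> \<beta>h s (t / (1 + \<rho>h r)))"
proof -
  obtain T where T: "\<And>n. 1 \<le> T n" "\<And>n. \<beta> (real n) (T n) \<le> (1/2)^n"
    using class_KL_geometric_times[OF assms(2)] by blast
  interpret KL_envelope \<beta> T
    using assms(2) T by unfold_locales
  obtain \<rho> where \<rho>: "class_K \<rho>" "\<And>r. 1 < r \<Longrightarrow> T (nat \<lceil>r\<rceil>) \<le> \<rho> r"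
    using exists_class_K_ge_ceiling[of T] T(1) by (meson order_trans zero_le_one)
  define \<beta>h where "\<beta>h s \<tau> = \<sigma> s / max 1 \<tau> + min (\<sigma> s) (envelope \<tau>)" for s \<tau>
  have "class_KL \<beta>h"
    unfolding \<beta>h_def using assms(1) continuous_on_subset[OF continuous_on_envelope]
      envelope_nonneg envelope_tendsto envelope_antimono
    by (intro class_KL_div_max_plus_min) (auto simp: monotone_on_def antimono_def)
  moreover have "min (\<sigma> s) (\<beta> r t) \<le> \<beta>h s (t / (1 + \<rho> r))" if "0 \<le> t" "0 \<le> r" "0 \<le> s" for t r s
    unfolding \<beta>h_def using that \<rho>(2) class_K_nonneg[OF assms(1)] class_K_nonneg[OF \<rho>(1)]
    by (intro min_le_div_max_plus_min envelope_nonneg le_envelope_div) auto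
  ultimately show ?thesis
    using \<rho>(1) by blast
qed

end
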